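(* In the $q$-shuffle algebra $\mathbb V$ the following hold. (i) Each of the families $\{W_{-k}\}_{k\in\mathbb N}$, $\{W_{k+1}\}_{k\in\mathbb N}$, $\{G_{k+1}\}_{k\in\mathbb N}$, $\{\tilde G_{k+1}\}_{k\in\mathbb N}$ consists of mutually commuting elements (with respect to $\star$). (ii) An alternating word is of the form $W_{-k}$ ($k\in\mathbb N$) if and only if it commutes with $x$. (iii) An alternating word is of the form $W_{k+1}$ ($k\in\mathbb N$) if and only if it commutes with $y$. (iv) An alternating word is of the form $G_{k+1}$ ($k\in\mathbb N$) if and only if it commutes with $q\,y\star x-q^{-1}x\star y$. (v) An alternating word is of the form $\tilde G_{k+1}$ ($k\in\mathbb N$) if and only if it commutes with $q\,x\star y-q^{-1}y\star x$.
   Context: Let $\mathbb F$ be a field and let $q\in\mathbb F$ be nonzero and not a root of unity. Let $\mathbb V$ be the free associative $\mathbb F$-algebra on noncommuting $x,y$, with basis the words (including $1$). Juxtaposition denotes concatenation. Set $\langle x,x\rangle=\langle y,y\rangle=2$ and $\langle x,y\rangle=\langle y,x\rangle=-2$. The $q$-shuffle product $\star$ is the bilinear product determined as follows: - $1\star v=v\star 1=v$; - for nontrivial words $u=u_1\cdots u_r$ and $v=v_1\cdots v_s$, $$u\star v=u_1((u_2\cdots u_r)\star v)+v_1(u\star(v_2\cdots v_s))q^{\langle u_1,v_1\rangle+\cdots+\langle u_r,v_1\rangle}.$$ This makes $\mathbb V$ an associative algebra, the $q$-shuffle algebra. "Commute" means $a\star b=b\star a$. A word $v_1\cdots v_n$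 is alternating if $n\ge1$ and $v_{i-1}\ne v_i$ for $2\le i\le n$. For $k\in\mathbb N$: - $W_{-k}=xyx\cdots x$ is the alternating word of length $2k+1$ beginning and ending with $x$; - $W_{k+1}=yxy\cdots y$ is the alternating word of length $2k+1$ beginning and ending with $y$; - $G_{k+1}=yxyx\cdots yx$ is the word of length $2k+2$; - $\tilde G_{k+1}=xyxy\cdots xy$ is the word of length $2k+2$. Every alternating word is exactly one of these. *)

theory Defs
  imports Main "HOL-Library.Poly_Mapping"
begin

datatype letter = X | Y

type_synonym 'a qV = "letter list \<Rightarrow>\<^sub>0 'a"

definition ip :: "letter \<Rightarrow> letter \<Rightarrow> int" where
  "ip a b = (if a = b then 2 else -2)"

definition word :: "letter list \<Rightarrow> 'a::field qV" where
  "word w = Poly_Mapping.single w 1"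

definition smul :: "'a::field \<Rightarrow> 'a qV \<Rightarrow> 'a qV" where
  "smul c p = Poly_Mapping.map (\<lambda>t. c * t) p"

definition prep :: "letter \<Rightarrow> 'a::field qV \<Rightarrow> 'a qV" where
  "prep a p = (\<Sum>w\<in>Poly_Mapping.keys p. Poly_Mapping.single (a # w) (Poly_Mapping.lookup p w))"

function qsh :: "'a::field \<Rightarrow> letter list \<Rightarrow> letter list \<Rightarrow> 'a qV" where
  "qsh q [] v = word v"
| "qsh q (a # u) [] = word (a # u)"
| "qsh q (a # u) (b # v) =
     prep a (qsh q u (b # v))
     + smul (q powi (\<Sum>c\<leftarrow>a # u. ip c b)) (prep b (qsh q (a # u) v))"
  by pat_completeness auto
termination
  by (relation "measure (\<lambda>(q, u, v). length u + length v)") auto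

definition qprod :: "'a::field \<Rightarrow> 'a qV \<Rightarrow> 'a qV \<Rightarrow> 'a qV" where
  "qprod q A B = (\<Sum>u\<in>Poly_Mapping.keys A. \<Sum>v\<in>Poly_Mapping.keys B. smul (Poly_Mapping.lookup A u * Poly_Mapping.lookup B v) (qsh q u v))"

definition qcommute :: "'a::field \<Rightarrow> 'a qV \<Rightarrow> 'a qV \<Rightarrow> bool" where
  "qcommute q A B \<longleftrightarrow> qprod q A B = qprod q B A"

definition alternating :: "letter list \<Rightarrow> bool" where
  "alternating w \<longleftrightarrow> length w \<ge> 1 \<and> (\<forall>i. 2 \<le> i \<and> i \<le> length w \<longrightarrow> w ! (i - 2) \<noteq> w ! (i - 1))"

definition alt_word :: "letter \<Rightarrow> nat \<Rightarrow> letter list" where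
  "alt_word a n = List.map (\<lambda>i. if even i then a else (if a = X then Y else X)) [0..<n]"

definition Wneg :: "nat \<Rightarrow> letter list" where
  "Wneg k = alt_word X (2 * k + 1)"

definition Wpos :: "nat \<Rightarrow> letter list" where
  "Wpos k = alt_word Y (2 * k + 1)"

definition G :: "nat \<Rightarrow> letter list" where
  "G k = alt_word Y (2 * k + 2)"

definition Gt :: "nat \<Rightarrow> letter list" where
  "Gt k = alt_word X (2 * k + 2)"

end

theory Submission
  imports Defs
begin

text \<open>Write [w](u \<star> v) for the coefficient of the word w in u \<star> v. Splitting off the
  first letter of w gives a recursion for these coefficients in the length of w. Along this
  recursion the symmetry of [w](u \<star> v) for two odd words a(ba)^k, a(ba)^l, and for two even
  words (ba)^k, (ba)^l, is tied to two identities mixing odd and even words; proving the four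
  identities simultaneously by induction on w gives (i).
  For the converses in (ii)-(v) one coefficient suffices: every alternating word of the wrong
  shape has a coefficient, 1 or 1 + q^2 up to a power of q, in which its product with a,
  resp. ba, differs from the product taken in the other order by a factor q^2 or q^-2; this
  factor is not 1 and the coefficient is not 0 because q^2 \<noteq> \<plusminus>1.
  Finally q y\<star>x - q^-1 x\<star>y = (q - q^-3) yx is a nonzero multiple of the word yx.\<close>

fun other :: "letter \<Rightarrow> letter" where
  "other X = Y"
| "other Y = X"

lemma other_other [simp]: "other (other a) = a"
  by (cases a) auto

lemma other_neq [simp]: "other a \<noteq> a" "a \<noteq> other a"
  by (cases a; simp)+

lemma letter_eq_or_other: "c = a \<or> c = other a"
  by (cases a; cases c) auto

lemma ip_other [simp]: "ip a a = 2" "ip a (other a) = -2" "ip (other a) a = -2"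
  by (simp_all add: ip_def)

definition ip_list :: "letter list \<Rightarrow> letter \<Rightarrow> int" where
  "ip_list u b = (\<Sum>c\<leftarrow>u. ip c b)"

lemma ip_list_Nil [simp]: "ip_list [] b = 0"
  and ip_list_Cons [simp]: "ip_list (c # u) b = ip c b + ip_list u b"
  by (simp_all add: ip_list_def)

definition shuffle_coeff :: "'a::field \<Rightarrow> letter list \<Rightarrow> letter list \<Rightarrow> letter list \<Rightarrow> 'a" where
  "shuffle_coeff q u v w = Poly_Mapping.lookup (qsh q u v) w"

lemma lookup_smul: "Poly_Mapping.lookup (smul c p) w = c * Poly_Mapping.lookup p w"
  by (simp add: smul_def map.rep_eq when_def)

lemma smul_one [simp]: "smul 1 p = p"
  by (rule poly_mapping_eqI) (simp add: lookup_smul)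

lemma lookup_word: "Poly_Mapping.lookup (word v :: 'a::field qV) w = (if w = v then 1 else 0)"
  by (simp add: word_def lookup_single when_def)

lemma lookup_word_self [simp]: "Poly_Mapping.lookup (word u :: 'a::field qV) u = 1"
  by (simp add: word_def)

lemma keys_word [simp]: "Poly_Mapping.keys (word u :: 'a::field qV) = {u}"
  by (simp add: word_def)

lemma lookup_prep_Nil: "Poly_Mapping.lookup (prep a p) [] = 0"
  by (simp add: prep_def lookup_sum lookup_single when_def)

lemma lookup_prep_Cons:
  "Poly_Mapping.lookup (prep a p) (c # w) = (if a = c then Poly_Mapping.lookup p w else 0)"
proof -
  have "Poly_Mapping.lookup (prep a p) (c # w) =
     (\<Sum>v\<in>Poly_Mapping.keys p. if v = w \<and> a = c then Poly_Mapping.lookup p v else 0)"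
    unfolding prep_def lookup_sum by (intro sum.cong) (auto simp: lookup_single when_def)
  also have "\<dots> = (if a = c then Poly_Mapping.lookup p w else 0)"
    by (cases "w \<in> Poly_Mapping.keys p") (auto simp: in_keys_iff)
  finally show ?thesis .
qed

lemma shuffle_coeff_Nil_left: "shuffle_coeff q [] v w = (if w = v then 1 else 0)"
  by (simp add: shuffle_coeff_def lookup_word)

lemma shuffle_coeff_Nil_right: "shuffle_coeff q u [] w = (if w = u then 1 else 0)"
  by (cases u) (simp_all add: shuffle_coeff_def lookup_word)

lemma shuffle_coeff_Nil: "shuffle_coeff q u v [] = (if u = [] \<and> v = [] then 1 else 0)"
  by (cases u; cases v)
    (simp_all add: shuffle_coeff_def lookup_word lookup_add lookup_smul lookup_prep_Nil)

lemma shuffle_coeff_Cons: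
  "shuffle_coeff q u v (c # w) =
     (case u of [] \<Rightarrow> 0 | a # u' \<Rightarrow> if a = c then shuffle_coeff q u' v w else 0)
   + (case v of [] \<Rightarrow> 0 | b # v' \<Rightarrow> if b = c then q powi ip_list u b * shuffle_coeff q u v' w else 0)"
proof (cases u)
  case Nil
  then show ?thesis by (cases v) (auto simp: shuffle_coeff_Nil_left)
next
  case (Cons a u')
  show ?thesis
  proof (cases v)
    case Nil
    then show ?thesis using \<open>u = a # u'\<close> by (auto simp: shuffle_coeff_Nil_right)
  next
    case (Cons b v')
    then show ?thesis
      using \<open>u = a # u'\<close>
      by (simp add: shuffle_coeff_def lookup_add lookup_smul lookup_prep_Cons ip_list_def)
  qed
qed

lemmas shuffle_coeff_simps =
  shuffle_coeff_Cons shuffle_coeff_Nil_left shuffle_coeff_Nil_right power_int_minus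

lemma qprod_word: "qprod q (word u) (word v) = qsh q u v"
  by (simp add: qprod_def)

lemma qcommute_word_iff:
  "qcommute q (word u) (word v) \<longleftrightarrow> (\<forall>w. shuffle_coeff q u v w = shuffle_coeff q v u w)"
  by (auto simp: qcommute_def qprod_word shuffle_coeff_def intro: poly_mapping_eqI)

lemma qcommute_word_single_iff:
  assumes "c \<noteq> 0"
  shows "qcommute q (word u) (Poly_Mapping.single v c) \<longleftrightarrow> qcommute q (word u) (word v)"
proof -
  have "qprod q (word u) (Poly_Mapping.single v c) = smul c (qsh q u v)"
    and "qprod q (Poly_Mapping.single v c) (word u) = smul c (qsh q v u)"
    using assms by (simp_all add: qprod_def)
  then have "qcommute q (word u) (Poly_Mapping.single v c) \<longleftrightarrow>
      (\<forall>w. c * shuffle_coeff q u v w = c * shuffle_coeff q v u w)"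
    by (auto simp: qcommute_def shuffle_coeff_def lookup_smul intro: poly_mapping_eqI
        dest: arg_cong[where f = "\<lambda>p. Poly_Mapping.lookup p _"])
  then show ?thesis
    using assms by (simp add: qcommute_word_iff)
qed

definition alt_pow :: "letter \<Rightarrow> nat \<Rightarrow> letter list" where
  "alt_pow c m = alt_word c (2 * m)"

abbreviation odd_alt :: "letter \<Rightarrow> nat \<Rightarrow> letter list" where
  "odd_alt a k \<equiv> a # alt_pow (other a) k"

lemma alt_word_Suc: "alt_word a (Suc n) = a # alt_word (other a) n"
proof -
  have "[0..<Suc n] = 0 # List.map Suc [0..<n]"
    by (simp add: map_Suc_upt upt_conv_Cons)
  then show ?thesis
    by (cases a) (auto simp: alt_word_def comp_def)
qed

lemma nth_alt_word: "i < n \<Longrightarrow> alt_word c n ! i = (if even i then c else other c)"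
  by (cases c) (simp_all add: alt_word_def)

lemma length_alt_word [simp]: "length (alt_word c n) = n"
  by (simp add: alt_word_def)

lemma alt_pow_0 [simp]: "alt_pow c 0 = []"
  by (simp add: alt_pow_def alt_word_def)

lemma alt_pow_Suc [simp]: "alt_pow c (Suc m) = c # other c # alt_pow c m"
  by (simp add: alt_pow_def alt_word_Suc)

lemma length_alt_pow [simp]: "length (alt_pow c m) = 2 * m"
  by (simp add: alt_pow_def)

lemma ip_list_alt_pow [simp]: "ip_list (alt_pow c m) d = 0"
  by (induction m) (cases c; cases d; simp add: ip_def)+

lemma Cons_alt_pow_neq_alt_pow [simp]:
  "c # alt_pow d k \<noteq> alt_pow e m" "alt_pow e m \<noteq> c # alt_pow d k"
proof -
  have "length (c # alt_pow d k) \<noteq> length (alt_pow e m)"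
    by simp presburger
  then show "c # alt_pow d k \<noteq> alt_pow e m" "alt_pow e m \<noteq> c # alt_pow d k"
    by metis+
qed

lemma alt_word_odd: "alt_word c (2 * m + 1) = odd_alt c m"
  by (simp add: alt_pow_def alt_word_Suc)

lemma alternating_eq_alt_word:
  assumes "alternating w"
  shows "w = alt_word (hd w) (length w)"
proof (rule nth_equalityI)
  have step: "w ! Suc i = other (w ! i)" if "Suc i < length w" for i
  proof -
    have "2 \<le> Suc (Suc i) \<and> Suc (Suc i) \<le> length w"
      using that by simp
    then have "w ! (Suc (Suc i) - 2) \<noteq> w ! (Suc (Suc i) - 1)"
      using assms unfolding alternating_def by blast
    then show ?thesis
      using letter_eq_or_other[of "w ! Suc i" "w ! i"] by auto
  qed
  have "w \<noteq> []"
    using assms by (auto simp: alternating_def)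
  then have "w ! i = (if even i then hd w else other (hd w))" if "i < length w" for i
    using that by (induction i) (auto simp: hd_conv_nth step)
  then show "w ! i = alt_word (hd w) (length w) ! i" if "i < length w" for i
    using that by (simp add: nth_alt_word)
qed simp

lemma alternating_cases [consumes 1, case_names odd even odd_other even_other]:
  assumes "alternating w"
  obtains m where "w = odd_alt a m"
  | m where "w = alt_pow a (Suc m)"
  | m where "w = odd_alt (other a) m"
  | m where "w = alt_pow (other a) (Suc m)"
proof -
  obtain n where w: "w = alt_word (hd w) n" and "n \<ge> 1"
    using alternating_eq_alt_word[OF assms] assms by (auto simp: alternating_def)
  then have "\<exists>m. n = 2 * m + 1 \<or> n = 2 * Suc m"
    by presburger
  then obtain m where "n = 2 * m + 1 \<or> n = 2 * Suc m"
    by blast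
  then have "w = alt_word (hd w) (2 * m + 1) \<or> w = alt_word (hd w) (2 * Suc m)"
    using w by metis
  then have "w = odd_alt (hd w) m \<or> w = alt_pow (hd w) (Suc m)"
    unfolding alt_word_odd alt_pow_def .
  moreover have "hd w = a \<or> hd w = other a"
    using letter_eq_or_other by blast
  ultimately show ?thesis
    using that by (metis other_other)
qed

text \<open>Splitting off the first letter of w, the symmetry for odd words reduces to the third
  identity at the tail of w, the symmetry for even words to the fourth, and the third and
  fourth to the two symmetries; the factor q^2 is q^<a(ba)^k, a>.\<close>

lemma shuffle_coeff_alt_identities:
  fixes q :: "'a::field" and a :: letter
  assumes "q \<noteq> 0"
  defines "odd_word \<equiv> odd_alt a" and "even_word \<equiv> alt_pow (other a)"
  shows "shuffle_coeff q (odd_word k) (odd_word l) w = shuffle_coeff q (odd_word l) (odd_word k) w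
    \<and> shuffle_coeff q (even_word k) (even_word l) w = shuffle_coeff q (even_word l) (even_word k) w
    \<and> shuffle_coeff q (even_word k) (odd_word l) w - q\<^sup>2 * shuffle_coeff q (odd_word l) (even_word k) w
        = shuffle_coeff q (even_word l) (odd_word k) w - q\<^sup>2 * shuffle_coeff q (odd_word k) (even_word l) w
    \<and> shuffle_coeff q (odd_word k) (even_word (Suc l)) w - shuffle_coeff q (even_word (Suc l)) (odd_word k) w
        = shuffle_coeff q (odd_word l) (even_word (Suc k)) w - shuffle_coeff q (even_word (Suc k)) (odd_word l) w"
  unfolding odd_word_def even_word_def
proof (induction w arbitrary: k l)
  case Nil
  then show ?case
    by (simp add: shuffle_coeff_Nil)
next
  case (Cons c w)
  note IH = Cons.IH[of k l] Cons.IH[of "k - 1" l] Cons.IH[of k "l - 1"] Cons.IH[of "k - 1" "l - 1"]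
  consider "c = a" | "c = other a"
    using letter_eq_or_other by blast
  then show ?case
    using IH Cons.IH[of k "Suc l"] Cons.IH[of "Suc k" l] assms
    by cases (cases k; cases l; auto simp: shuffle_coeff_simps field_simps power2_eq_square)+
qed

lemma qcommute_odd_alt:
  fixes q :: "'a::field"
  assumes "q \<noteq> 0"
  shows "qcommute q (word (odd_alt a k)) (word (odd_alt a l))"
  using shuffle_coeff_alt_identities[OF assms] by (simp add: qcommute_word_iff)

lemma qcommute_alt_pow:
  fixes q :: "'a::field"
  assumes "q \<noteq> 0"
  shows "qcommute q (word (alt_pow b k)) (word (alt_pow b l))"
  using shuffle_coeff_alt_identities[OF assms, of "other b"] by (simp add: qcommute_word_iff)

lemma not_qcommute_wordI:
  assumes "shuffle_coeff q u v w = c" and "shuffle_coeff q v u w = d" and "c \<noteq> d"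
  shows "\<not> qcommute q (word u) (word v)"
  using assms by (auto simp: qcommute_word_iff)

lemma square_neq_one_and_minus_one:
  fixes q :: "'a::field"
  assumes "q ^ 4 \<noteq> 1"
  shows "q\<^sup>2 \<noteq> 1" and "q\<^sup>2 \<noteq> -1"
proof -
  have "q ^ 4 = q\<^sup>2 * q\<^sup>2"
    by (simp flip: power_add)
  then show "q\<^sup>2 \<noteq> 1" and "q\<^sup>2 \<noteq> -1"
    using assms by (metis mult_1, metis mult_minus1 minus_minus)
qed

lemma shuffle_coeff_alt_pow_letter:
  "shuffle_coeff q (alt_pow a m) [a] (odd_alt a m) = 1"
  "(q::'a::field) \<noteq> 0 \<Longrightarrow> shuffle_coeff q [a] (alt_pow a m) (odd_alt a m) = 1"
  by (induction m) (auto simp: shuffle_coeff_simps)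

context
  fixes q :: "'a::field" and a :: letter
  assumes q_neq_0: "q \<noteq> 0" and q4_neq_1: "q ^ 4 \<noteq> 1"
begin

lemma inverse_square_neqs:
  "inverse (q\<^sup>2) \<noteq> 1" "inverse (q\<^sup>2) + 1 \<noteq> 1 + q\<^sup>2" "1 + q\<^sup>2 \<noteq> inverse (q\<^sup>2) * (1 + q\<^sup>2)"
  using square_neq_one_and_minus_one[OF q4_neq_1] q_neq_0 q4_neq_1
  by (auto simp: field_simps)

lemma not_qcommute_odd_other_letter: "\<not> qcommute q (word (odd_alt (other a) m)) (word [a])"
proof (rule not_qcommute_wordI)
  show "shuffle_coeff q (odd_alt (other a) m) [a] (alt_pow a (Suc m)) = inverse (q\<^sup>2)"
    and "shuffle_coeff q [a] (odd_alt (other a) m) (alt_pow a (Suc m)) = 1"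
    using q_neq_0 by (cases m; simp add: shuffle_coeff_simps)+
qed (fact inverse_square_neqs)

lemma not_qcommute_even_letter: "\<not> qcommute q (word (alt_pow a (Suc m))) (word [a])"
proof (rule not_qcommute_wordI)
  show "shuffle_coeff q (alt_pow a (Suc m)) [a] (a # alt_pow a (Suc m)) = inverse (q\<^sup>2) + 1"
    and "shuffle_coeff q [a] (alt_pow a (Suc m)) (a # alt_pow a (Suc m)) = 1 + q\<^sup>2"
    using q_neq_0 by (cases m; simp add: shuffle_coeff_simps)+
qed (fact inverse_square_neqs)

lemma not_qcommute_even_other_letter: "\<not> qcommute q (word (alt_pow (other a) (Suc m))) (word [a])"
proof (rule not_qcommute_wordI)
  let ?w = "other a # a # odd_alt a m"
  show "shuffle_coeff q (alt_pow (other a) (Suc m)) [a] ?w = 1 + q\<^sup>2"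
    and "shuffle_coeff q [a] (alt_pow (other a) (Suc m)) ?w = inverse (q\<^sup>2) * (1 + q\<^sup>2)"
    using q_neq_0 by (cases m; simp add: shuffle_coeff_simps)+
qed (fact inverse_square_neqs)

lemma not_qcommute_odd_pair: "\<not> qcommute q (word (odd_alt a m)) (word [other a, a])"
proof (rule not_qcommute_wordI)
  let ?w = "other a # a # odd_alt a m"
  show "shuffle_coeff q (odd_alt a m) [other a, a] ?w = inverse (q\<^sup>2) * (1 + q\<^sup>2)"
    and "shuffle_coeff q [other a, a] (odd_alt a m) ?w = 1 + q\<^sup>2"
    using q_neq_0 by (cases m; simp add: shuffle_coeff_simps)+
qed (metis inverse_square_neqs(3))

lemma not_qcommute_even_pair: "\<not> qcommute q (word (alt_pow a (Suc m))) (word [other a, a])"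
proof (rule not_qcommute_wordI)
  let ?w = "other a # a # alt_pow a (Suc m)"
  show "shuffle_coeff q (alt_pow a (Suc m)) [other a, a] ?w = inverse (q\<^sup>2) + 1"
    and "shuffle_coeff q [other a, a] (alt_pow a (Suc m)) ?w = 1 + q\<^sup>2"
    using q_neq_0 by (cases m; simp add: shuffle_coeff_simps)+
qed (fact inverse_square_neqs)

lemma not_qcommute_odd_other_pair: "\<not> qcommute q (word (odd_alt (other a) m)) (word [other a, a])"
proof (rule not_qcommute_wordI)
  let ?w = "other a # other a # a # alt_pow (other a) m"
  show "shuffle_coeff q (odd_alt (other a) m) [other a, a] ?w = 1 + q\<^sup>2"
    and "shuffle_coeff q [other a, a] (odd_alt (other a) m) ?w = inverse (q\<^sup>2) + 1"
    using q_neq_0 shuffle_coeff_alt_pow_letter[of q a m]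
    by (cases m; simp add: shuffle_coeff_simps)+
qed (metis inverse_square_neqs(2))

lemma qcommute_letter_iff:
  assumes "alternating w"
  shows "(\<exists>k. w = odd_alt a k) \<longleftrightarrow> qcommute q (word w) (word [a])"
  using assms
proof (cases rule: alternating_cases[where a = a])
  case (odd m)
  then show ?thesis
    using qcommute_odd_alt[OF q_neq_0, of a m 0] by auto
next
  case (even m)
  then show ?thesis
    using not_qcommute_even_letter by auto
next
  case (odd_other m)
  then show ?thesis
    using not_qcommute_odd_other_letter by auto
next
  case (even_other m)
  then show ?thesis
    using not_qcommute_even_other_letter by auto
qed

lemma qcommute_pair_iff:
  assumes "alternating w"
  shows "(\<exists>k. w = alt_pow (other a) (Suc k)) \<longleftrightarrow> qcommute q (word w) (word [other a, a])"
  using assms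
proof (cases rule: alternating_cases[where a = a])
  case (odd m)
  then show ?thesis
    using not_qcommute_odd_pair by auto
next
  case (even m)
  then show ?thesis
    using not_qcommute_even_pair by auto
next
  case (odd_other m)
  then show ?thesis
    using not_qcommute_odd_other_pair by auto
next
  case (even_other m)
  then show ?thesis
    using qcommute_alt_pow[OF q_neq_0, of "other a" "Suc m" 1] by auto
qed

lemma q_commutator_letters:
  assumes "b \<noteq> a"
  shows "smul q (qprod q (word [b]) (word [a])) - smul (inverse q) (qprod q (word [a]) (word [b]))
    = Poly_Mapping.single [b, a] (q - inverse q ^ 3)"
proof (rule poly_mapping_eqI)
  fix w
  have letters: "shuffle_coeff q [c] [d] w
      = (if w = [c, d] then 1 else 0) + (if w = [d, c] then inverse (q\<^sup>2) else 0)"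
    if "c \<noteq> d" for c d
    using that by (cases w) (auto simp: shuffle_coeff_simps shuffle_coeff_Nil ip_def)
  have "Poly_Mapping.lookup (smul q (qprod q (word [b]) (word [a]))
        - smul (inverse q) (qprod q (word [a]) (word [b]))) w
      = q * shuffle_coeff q [b] [a] w - inverse q * shuffle_coeff q [a] [b] w"
    by (simp add: lookup_minus lookup_smul qprod_word shuffle_coeff_def)
  also have "\<dots> = Poly_Mapping.lookup (Poly_Mapping.single [b, a] (q - inverse q ^ 3)) w"
    using assms q_neq_0 letters[of a b] letters[of b a]
    by (simp add: lookup_single when_def field_simps power2_eq_square power3_eq_cube)
  finally show "Poly_Mapping.lookup (smul q (qprod q (word [b]) (word [a]))
        - smul (inverse q) (qprod q (word [a]) (word [b]))) w
      = Poly_Mapping.lookup (Poly_Mapping.single [b, a] (q - inverse q ^ 3)) w" .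
qed

lemma q_commutator_coeff_neq_0: "q - inverse q ^ 3 \<noteq> 0"
proof
  assume "q - inverse q ^ 3 = 0"
  then have "q * q ^ 3 = inverse q ^ 3 * q ^ 3"
    by simp
  also have "\<dots> = 1"
    using q_neq_0 by (simp flip: power_mult_distrib)
  finally show False
    using q4_neq_1 by (simp flip: power_Suc)
qed

end

lemma Wneg_eq: "Wneg k = odd_alt X k"
  unfolding Wneg_def alt_word_odd by simp

lemma Wpos_eq: "Wpos k = odd_alt Y k"
  unfolding Wpos_def alt_word_odd by simp

lemma G_eq: "G k = alt_pow Y (Suc k)"
  by (simp add: G_def alt_pow_def)

lemma Gt_eq: "Gt k = alt_pow X (Suc k)"
  by (simp add: Gt_def alt_pow_def)

theorem lemma5p12:
  fixes q :: "'a::field"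
  assumes "q \<noteq> 0" and "\<forall>n::nat. n \<ge> 1 \<longrightarrow> q ^ n \<noteq> 1"
  shows
   "(\<forall>k l. qcommute q (word (Wneg k)) (word (Wneg l)))
  \<and> (\<forall>k l. qcommute q (word (Wpos k)) (word (Wpos l)))
  \<and> (\<forall>k l. qcommute q (word (G k)) (word (G l)))
  \<and> (\<forall>k l. qcommute q (word (Gt k)) (word (Gt l)))
  \<and> (\<forall>w. alternating w \<longrightarrow>
        ((\<exists>k. w = Wneg k) \<longleftrightarrow> qcommute q (word w) (word [X])))
  \<and> (\<forall>w. alternating w \<longrightarrow>
        ((\<exists>k. w = Wpos k) \<longleftrightarrow> qcommute q (word w) (word [Y])))
  \<and> (\<forall>w. alternating w \<longrightarrow>
        ((\<exists>k. w = G k) \<longleftrightarrow> qcommute q (word w)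
           (smul q (qprod q (word [Y]) (word [X])) - smul (inverse q) (qprod q (word [X]) (word [Y])))))
  \<and> (\<forall>w. alternating w \<longrightarrow>
        ((\<exists>k. w = Gt k) \<longleftrightarrow> qcommute q (word w)
           (smul q (qprod q (word [X]) (word [Y])) - smul (inverse q) (qprod q (word [Y]) (word [X])))))"
proof -
  have q4: "q ^ 4 \<noteq> 1"
    using assms(2) by simp
  note commutator = q_commutator_letters[OF assms(1) q4]
  note qcommute_commutator = qcommute_word_single_iff[OF q_commutator_coeff_neq_0[OF assms(1) q4]]
  show ?thesis
    unfolding Wneg_eq Wpos_eq G_eq Gt_eq
    using qcommute_odd_alt[OF assms(1), of X] qcommute_odd_alt[OF assms(1), of Y]
      qcommute_alt_pow[OF assms(1)]
      qcommute_letter_iff[OF assms(1) q4, where a = X] qcommute_letter_iff[OF assms(1) q4, where a = Y]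
      qcommute_pair_iff[OF assms(1) q4, where a = X] qcommute_pair_iff[OF assms(1) q4, where a = Y]
    by (simp add: commutator qcommute_commutator del: alt_pow_Suc)
qed

end
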